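(* Let $n>0$ be an integer such that $\lambda_n:=4\cdot5^n-1$ is prime, let $h\in\mathbb{F}_{\lambda_n}$ be nonzero, let $\mathcal{H}/\mathbb{F}_{\lambda_n}$ be the hyperelliptic curve $y^2=x^5+h$, and let $\mathcal{J}$ be its Jacobian. Then $\mathcal{J}[2](\mathbb{F}_{\lambda_n})\cong\mathbb{Z}/(2)\times\mathbb{Z}/(2)$.
   Context: $\mathcal{J}[2](\mathbb{F}_{\lambda_n})$ denotes the group of $\mathbb{F}_{\lambda_n}$-rational points of $\mathcal{J}$ killed by $2$. *)

theory Defs
  imports "HOL-Computational_Algebra.Computational_Algebra" "HOL-Algebra.Elementary_Groups"
begin

text \<open>Jacobian of the genus-2 imaginary hyperelliptic curve y^2 = f(x), f monic squarefree of
degree 5, over a field K of characteristic not 2, in Mumford representation: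
K-rational points of the Jacobian are the reduced pairs (u,v) of polynomials over K with
u monic, deg v < deg u <= 2 (or (u,v) = (1,0)), and u dividing v^2 - f.\<close>

definition mumford_reduced :: "'a::field_gcd poly \<Rightarrow> 'a poly \<times> 'a poly \<Rightarrow> bool" where
  "mumford_reduced f D \<longleftrightarrow>
     (let u = fst D; v = snd D in
       lead_coeff u = 1 \<and> degree u \<le> 2 \<and> (degree v < degree u \<or> v = 0) \<and>
       u dvd (v^2 - f))"

definition cantor_compose :: "'a::field_gcd poly \<Rightarrow> 'a poly \<times> 'a poly \<Rightarrow> 'a poly \<times> 'a poly
                               \<Rightarrow> 'a poly \<times> 'a poly" where
  "cantor_compose f D1 D2 =
     (let u1 = fst D1; v1 = snd D1; u2 = fst D2; v2 = snd D2;
          d1 = gcd u1 u2; (e1, e2) = bezout_coefficients u1 u2;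
          d = gcd d1 (v1 + v2); (c1, c2) = bezout_coefficients d1 (v1 + v2);
          s1 = c1 * e1; s2 = c1 * e2; s3 = c2;
          u = (u1 * u2) div (d^2);
          v = ((s1 * u1 * v2 + s2 * u2 * v1 + s3 * (v1 * v2 + f)) div d) mod u
      in (u, v))"

definition cantor_reduce_step :: "'a::field_gcd poly \<Rightarrow> 'a poly \<times> 'a poly \<Rightarrow> 'a poly \<times> 'a poly" where
  "cantor_reduce_step f D =
     (let u = fst D; v = snd D in
      if degree u \<le> 2 then D
      else (let u' = (f - v^2) div u; v' = (- v) mod u' in
            (smult (inverse (lead_coeff u')) u', v')))"

text \<open>Cantor addition. Composing two reduced divisors gives deg u <= 4; two reduction
steps always suffice (in fact one does), further steps are the identity.\<close>
definition cantor_add :: "'a::field_gcd poly \<Rightarrow> 'a poly \<times> 'a poly \<Rightarrow> 'a poly \<times> 'a poly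
                            \<Rightarrow> 'a poly \<times> 'a poly" where
  "cantor_add f D1 D2 =
     (let (u, v) = (cantor_reduce_step f ^^ 2) (cantor_compose f D1 D2)
      in (smult (inverse (lead_coeff u)) u, v))"

definition jacobian :: "'a::field_gcd poly \<Rightarrow> ('a poly \<times> 'a poly) monoid" where
  "jacobian f = \<lparr> carrier = {D. mumford_reduced f D}, mult = cantor_add f, one = (1, 0) \<rparr>"

definition two_torsion :: "'a::field_gcd poly \<Rightarrow> ('a poly \<times> 'a poly) monoid" where
  "two_torsion f = (jacobian f)\<lparr> carrier :=
      {D \<in> carrier (jacobian f). D \<otimes>\<^bsub>jacobian f\<^esub> D = \<one>\<^bsub>jacobian f\<^esub>} \<rparr>"

end

(* Write p = 4 * 5^n - 1, so p = 4 (mod 5).  Since 5 is prime to p - 1, the fifth-power map of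
   F_p is bijective and x^5 + h has exactly one root alpha.  By quadratic reciprocity 5 is a
   square mod p, so F_p contains a root a of a^2 = a + 1, and
     x^5 + h = (x - alpha) (x^2 + a alpha x + alpha^2) (x^2 + (1 - a) alpha x + alpha^2),
   where the quadratic factors have no roots.  A reduced divisor (u, v) with v <> 0 is never
   2-torsion: doubling it composes to a u-part (u / gcd(u, 2v))^2 of degree 2 or 4, which Cantor
   reduction never brings down to degree 0.  Hence J[2](F_p) consists of the divisors (u, 0) with
   u a monic divisor of x^5 + h of degree at most 2, i.e. u = 1, x - alpha or one of the two
   quadratics, and these add like Z/2 x Z/2. *)

theory Submission
  imports Defs "HOL-Number_Theory.Number_Theory"
begin

hide_const (open) UnivPoly.monom Module.smult

text \<open>This is the library's \<open>finite_field_power_card_eq_same\<close>, which is stated for the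
  sort \<open>finite_field\<close> and hence does not apply to a type of sort \<open>{field, finite}\<close>.\<close>

lemma finite_field_power_card_minus_one:
  fixes x :: "'a::{field,finite}"
  assumes "x \<noteq> 0"
  shows "x ^ (card (UNIV :: 'a set) - 1) = 1"
proof -
  let ?U = "UNIV - {0::'a}"
  have "(\<Prod>y\<in>?U. x * y) = (\<Prod>y\<in>(*) x ` ?U. y)"
    using assms by (simp add: prod.reindex inj_on_def)
  also have "(*) x ` ?U = ?U"
  proof (intro equalityI subsetI)
    fix y assume "y \<in> ?U"
    then show "y \<in> (*) x ` ?U" using assms by (intro image_eqI[of _ _ "y / x"]) auto
  qed (use assms in auto)
  finally have "x ^ card ?U * \<Prod>?U = 1 * \<Prod>?U" by (simp add: prod.distrib)
  then have "x ^ card ?U = 1" by (subst (asm) mult_right_cancel) auto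
  moreover have "card ?U = card (UNIV :: 'a set) - 1" by (simp add: card_Diff_singleton)
  ultimately show ?thesis by simp
qed

lemma finite_field_power_cong:
  fixes x :: "'a::{field,finite}"
  assumes "x \<noteq> 0" and "[m = m'] (mod card (UNIV :: 'a set) - 1)"
  shows "x ^ m = x ^ m'"
proof -
  let ?n = "card (UNIV :: 'a set) - 1"
  have reduce: "x ^ k = x ^ (k mod ?n)" for k
  proof -
    have "x ^ k = (x ^ ?n) ^ (k div ?n) * x ^ (k mod ?n)"
      by (simp flip: power_mult power_add)
    then show ?thesis using finite_field_power_card_minus_one[OF assms(1)] by simp
  qed
  show ?thesis using assms(2) by (metis reduce cong_def)
qed

lemma bij_power_if_coprime:
  assumes "e > 0" and "coprime e (card (UNIV :: 'a set) - 1)"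
  shows "bij (\<lambda>x::'a::{field,finite}. x ^ e)"
proof -
  obtain k where k: "[e * k = 1] (mod card (UNIV :: 'a set) - 1)"
    using cong_solve_coprime_nat[OF assms(2)] by auto
  have "x = y" if "x ^ e = y ^ e" for x y :: 'a
  proof (cases "x = 0 \<or> y = 0")
    case True
    then show ?thesis using that assms(1) by (auto simp: zero_power)
  next
    case False
    then have "x = (x ^ e) ^ k" "y = (y ^ e) ^ k"
      using finite_field_power_cong[OF _ k] by (simp_all flip: power_mult)
    then show ?thesis using that by simp
  qed
  then have "inj (\<lambda>x::'a. x ^ e)" by (auto intro: injI)
  then show ?thesis by (simp add: bij_def finite_UNIV_inj_surj)
qed

lemma bij_power_5_if_card_mod_5:
  assumes "card (UNIV :: 'a set) mod 5 = 4"
  shows "bij (\<lambda>x::'a::{field,finite}. x ^ 5)"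
proof -
  have "\<not> 5 dvd card (UNIV :: 'a set) - 1" using assms by presburger
  then have "coprime 5 (card (UNIV :: 'a set) - 1)" by (intro prime_imp_coprime) auto
  then show ?thesis by (intro bij_power_if_coprime) auto
qed

lemma CHAR_eq_card_if_prime:
  assumes "prime (card (UNIV :: 'a::ring_1 set))"
  shows "CHAR('a) = card (UNIV :: 'a set)"
  using CHAR_dvd_CARD[where 'a = 'a] assms CHAR_not_1[where 'a = 'a] by (auto simp: prime_nat_iff)

lemma of_nat_ne_0_if_less_CHAR:
  assumes "0 < m" and "m < CHAR('a::semiring_1)"
  shows "of_nat m \<noteq> (0::'a)"
  using assms by (auto simp: of_nat_eq_0_iff_char_dvd dest: dvd_imp_le)

lemma exists_sqrt_if_QuadRes:
  assumes "QuadRes (int CHAR('a::ring_1)) a"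
  shows "\<exists>s::'a. s ^ 2 = of_int a"
proof -
  obtain y where "[y ^ 2 = a] (mod int CHAR('a))" using assms unfolding QuadRes_def by blast
  then have "of_int (y ^ 2) = (of_int a :: 'a)" by (simp only: of_int_eq_iff_cong_CHAR)
  then show ?thesis by auto
qed

lemma prime_gt_5_if_mod_5:
  fixes p :: nat
  assumes "prime p" and "p mod 5 = 1 \<or> p mod 5 = 4"
  shows "5 < p"
proof (rule ccontr)
  assume "\<not> 5 < p"
  then have "p = 0 \<or> p = 1 \<or> p = 2 \<or> p = 3 \<or> p = 4 \<or> p = 5" by linarith
  then show False using assms by auto
qed

lemma QuadRes_five:
  assumes "prime p" and "p mod 5 = 1 \<or> p mod 5 = 4"
  shows "QuadRes (int p) 5"
proof -
  have p_gt_5: "5 < p" using assms by (rule prime_gt_5_if_mod_5)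
  have p_mod_5: "int p mod 5 = 1 \<or> int p mod 5 = 4"
    using assms(2) by (metis of_nat_mod of_nat_numeral of_nat_1)
  then have "[1 ^ 2 = int p] (mod 5) \<or> [2 ^ 2 = int p] (mod 5)"
    by (auto simp: cong_def)
  then have "QuadRes 5 (int p)" unfolding QuadRes_def by blast
  moreover have "\<not> [int p = 0] (mod 5)" using p_mod_5 by (auto simp: cong_def)
  ultimately have "Legendre (int p) 5 = 1" by (simp add: Legendre_def)
  moreover have "Legendre (int p) (int 5) * Legendre (int 5) (int p) = 1"
    using Quadratic_Reciprocity[of p 5] assms(1) p_gt_5 by simp
  ultimately have "Legendre 5 (int p) = 1" by simp
  then show ?thesis by (auto simp: Legendre_def split: if_splits)
qed

section \<open>The golden ratio and the splitting of \<open>x^5 + h\<close>\<close>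

lemma exists_golden_ratio:
  fixes s :: "'a::field"
  assumes "(2::'a) \<noteq> 0" and "s ^ 2 = 5"
  shows "\<exists>a::'a. a ^ 2 = a + 1"
proof
  define a where "a = (1 + s) / 2"
  have "2 * a - 1 = s" using assms(1) by (simp add: a_def field_simps)
  have "2 * (2 * (a ^ 2 - a - 1)) = (2 * a - 1) ^ 2 - 5" by (simp add: power2_eq_square algebra_simps)
  also have "\<dots> = 0" using \<open>2 * a - 1 = s\<close> assms(2) by simp
  finally have "2 * (2 * (a ^ 2 - a - 1)) = 0" .
  then have "a ^ 2 - a - 1 = 0" using assms(1) by (simp only: mult_eq_0_iff) simp
  then show "a ^ 2 = a + 1" by (simp add: algebra_simps)
qed

lemma exists_golden_ratio_prime_field:
  assumes "prime (card (UNIV :: 'a::{field,finite} set))"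
    and "card (UNIV :: 'a set) mod 5 = 1 \<or> card (UNIV :: 'a set) mod 5 = 4"
  shows "\<exists>a::'a. a ^ 2 = a + 1"
proof -
  have char: "CHAR('a) = card (UNIV :: 'a set)" using assms(1) by (rule CHAR_eq_card_if_prime)
  then have "of_nat 2 \<noteq> (0::'a)"
    using prime_gt_5_if_mod_5[OF assms] by (intro of_nat_ne_0_if_less_CHAR) auto
  moreover obtain s :: 'a where "s ^ 2 = 5"
    using exists_sqrt_if_QuadRes[where 'a = 'a, of 5] QuadRes_five[OF assms] char by auto
  ultimately show ?thesis using exists_golden_ratio by simp
qed

lemma golden_ratio_conjugate:
  fixes a :: "'a::comm_ring_1"
  assumes "a ^ 2 = a + 1"
  shows "(1 - a) ^ 2 = (1 - a) + 1"
  using assms by (simp add: power2_eq_square algebra_simps)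

lemma golden_ratio_ne_conjugate:
  fixes a :: "'a::comm_ring_1"
  assumes "a ^ 2 = a + 1" and "(5::'a) \<noteq> 0"
  shows "a \<noteq> 1 - a"
proof
  assume "a = 1 - a"
  then have two_a: "2 * a = 1" by (simp add: algebra_simps)
  have "1 = (2 * a) ^ 2" using two_a by simp
  also have "\<dots> = 2 * (2 * a) + 4" using assms(1) by (simp add: power_mult_distrib algebra_simps)
  also have "\<dots> = 6" using two_a by simp
  finally have "(5::'a) + 1 = 0 + 1" by simp
  then have "(5::'a) = 0" by (rule add_right_imp_eq)
  with assms(2) show False by simp
qed

text \<open>x^5 - \<alpha>^5 = (x - \<alpha>) (x^4 + \<alpha> x^3 + \<alpha>^2 x^2 + \<alpha>^3 x + \<alpha>^4), and the quartic
  splits because a (1 - a) = -1 for a root a of a^2 = a + 1.\<close>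

lemma quintic_factorization:
  fixes a \<alpha> h :: "'a::comm_ring_1"
  assumes "a ^ 2 = a + 1" and "\<alpha> ^ 5 = - h"
  shows "monom 1 5 + [:h:] = [:-\<alpha>, 1:] * [:\<alpha>^2, a * \<alpha>, 1:] * [:\<alpha>^2, (1 - a) * \<alpha>, 1:]"
proof -
  have quartic: "[:\<alpha>^2, a * \<alpha>, 1:] * [:\<alpha>^2, (1 - a) * \<alpha>, 1:] = [:\<alpha>^4, \<alpha>^3, \<alpha>^2, \<alpha>, 1:]"
    using assms(1) by (simp add: power2_eq_square power3_eq_cube power4_eq_xxxx algebra_simps)
  show ?thesis
    unfolding mult.assoc quartic using assms(2) by (simp add: monom_Suc numeral_eq_Suc algebra_simps)
qed

lemma poly_golden_quadratic_nonzero: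
  fixes a \<alpha> :: "'a::idom"
  assumes "a ^ 2 = a + 1" and "(5::'a) \<noteq> 0" and "\<alpha> \<noteq> 0"
  shows "poly [:\<alpha>^2, a * \<alpha>, 1:] \<alpha> \<noteq> 0"
proof
  assume "poly [:\<alpha>^2, a * \<alpha>, 1:] \<alpha> = 0"
  then have "\<alpha> ^ 2 * (a + 2) = 0" by (simp add: algebra_simps power2_eq_square)
  then have "a = - 2" using assms(3) by (simp add: eq_neg_iff_add_eq_0)
  then have "(4::'a) = - 1" using assms(1) by (simp add: power2_eq_square)
  then have "(5::'a) = 0" by (simp add: eq_neg_iff_add_eq_0)
  with assms(2) show False by simp
qed

lemma normalize_monic_poly:
  fixes u :: "'a::{field,normalization_semidom} poly"
  assumes "lead_coeff u = 1"
  shows "normalize u = u"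
  using assms by (simp add: normalize_poly_eq_map_poly unit_factor_poly_def)

lemma degree_div_poly:
  fixes p q :: "'a::field poly"
  assumes "q \<noteq> 0" and "degree q \<le> degree p"
  shows "degree (p div q) = degree p - degree q"
proof (cases "p div q = 0")
  case True
  then show ?thesis using assms by (auto simp: div_poly_eq_0_iff)
next
  case False
  have "degree p = degree (p div q * q)"
  proof (cases "p mod q = 0")
    case True
    then show ?thesis by (metis add_0_right div_mult_mod_eq)
  next
    case False
    then have "degree (p mod q) < degree (p div q * q)"
      using degree_mod_less[OF assms(1), of p] \<open>p div q \<noteq> 0\<close> assms(1) by (simp add: degree_mult_eq)
    then show ?thesis by (metis degree_add_eq_left div_mult_mod_eq)
  qed
  then show ?thesis using False assms(1) by (simp add: degree_mult_eq)
qed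

lemma monic_degree_0_eq_1:
  fixes u :: "'a::comm_semiring_1 poly"
  assumes "lead_coeff u = 1" and "degree u = 0"
  shows "u = 1"
  using assms by (auto elim!: degree_eq_zeroE)

lemma monic_dvd_same_degree_eq:
  fixes u w :: "'a::field poly"
  assumes "lead_coeff u = 1" "lead_coeff w = 1" and "u dvd w" and "degree u = degree w"
  shows "u = w"
proof -
  obtain c where c: "w = u * c" using assms(3) by (auto elim: dvdE)
  have "u \<noteq> 0" "c \<noteq> 0" using assms(1,2) c by auto
  then have "degree c = 0" using c assms(4) by (simp add: degree_mult_eq)
  moreover have "lead_coeff c = 1" using c assms(1,2) by (simp add: lead_coeff_mult)
  ultimately have "c = 1" by (intro monic_degree_0_eq_1)
  then show ?thesis using c by simp
qed

lemma degree_1_poly_root: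
  fixes p :: "'a::field poly"
  assumes "degree p = 1"
  obtains x where "poly p x = 0"
proof -
  obtain a b where "p = [:b, a:]" "a \<noteq> 0" using degree1_coeffs[OF assms] .
  then show ?thesis using that[of "- b / a"] by simp
qed

lemma prime_elem_if_degree_2_no_root:
  fixes q :: "'a::field poly"
  assumes "degree q = 2" and "\<And>x. poly q x \<noteq> 0"
  shows "prime_elem q"
proof (intro field_poly_irreducible_imp_prime irreducibleI)
  show "q \<noteq> 0" using assms(1) by auto
  then show "\<not> is_unit q" using assms(1) by (simp add: is_unit_iff_degree)
  fix a b assume q: "q = a * b"
  then have "a \<noteq> 0" "b \<noteq> 0" using \<open>q \<noteq> 0\<close> by auto
  then have "degree a + degree b = 2" using q assms(1) by (simp add: degree_mult_eq)
  moreover have "degree a \<noteq> 1"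
  proof
    assume "degree a = 1"
    then obtain x where "poly a x = 0" by (rule degree_1_poly_root)
    then show False using q assms(2)[of x] by simp
  qed
  ultimately have "degree a = 0 \<or> degree b = 0" by linarith
  then show "is_unit a \<or> is_unit b" using \<open>a \<noteq> 0\<close> \<open>b \<noteq> 0\<close> is_unit_iff_degree by blast
qed

lemma degree_diff_square:
  fixes f v :: "'a::idom poly"
  assumes "degree f = 5" and "degree v \<le> 3"
  shows "degree (f - v ^ 2) \<in> {5, 6}"
proof -
  have degree_v2: "degree (v ^ 2) = 2 * degree v"
    by (cases "v = 0") (simp_all add: degree_power_eq)
  show ?thesis
  proof (cases "degree v \<le> 2")
    case True
    then have "degree (f + - (v ^ 2)) = degree f"
      using assms(1) degree_v2 by (intro degree_add_eq_left) simp
    then show ?thesis using assms(1) by (simp only: diff_conv_add_uminus) simp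
  next
    case False
    then have "degree (f + - (v ^ 2)) = degree (- (v ^ 2))"
      using assms(1) degree_v2 by (intro degree_add_eq_right) simp
    then show ?thesis using False assms(2) degree_v2 by (simp only: diff_conv_add_uminus) simp
  qed
qed

section \<open>Cantor arithmetic on divisors of a quintic\<close>

lemma cantor_reduce_step_reduced:
  "degree (fst D) \<le> 2 \<Longrightarrow> cantor_reduce_step f D = D"
  by (simp add: cantor_reduce_step_def)

lemma cantor_add_self_snd_zero:
  fixes f u :: "'a::field_gcd poly"
  assumes "lead_coeff u = 1"
  shows "cantor_add f (u, 0) (u, 0) = (1, 0)"
proof -
  have "u \<noteq> 0" using assms by auto
  then have "u * u div u\<^sup>2 = 1" by (simp add: power2_eq_square)
  then have "cantor_compose f (u, 0) (u, 0) = (1, 0)"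
    using normalize_monic_poly[OF assms]
    by (simp add: cantor_compose_def Let_def case_prod_unfold)
  then show ?thesis by (simp add: cantor_add_def cantor_reduce_step_def numeral_2_eq_2)
qed

lemma cantor_compose_coprime_snd_zero:
  fixes f u1 u2 :: "'a::field_gcd poly"
  assumes "coprime u1 u2" and "u1 * u2 dvd f"
  shows "cantor_compose f (u1, 0) (u2, 0) = (u1 * u2, 0)"
  using assms by (simp add: cantor_compose_def Let_def case_prod_unfold)

lemma cantor_add_coprime_snd_zero:
  fixes f u1 u2 :: "'a::field_gcd poly"
  assumes "lead_coeff u1 = 1" "lead_coeff u2 = 1" and "coprime u1 u2"
    and "u1 * u2 dvd f" and "degree (u1 * u2) \<le> 2"
  shows "cantor_add f (u1, 0) (u2, 0) = (u1 * u2, 0)"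
proof -
  have "lead_coeff (u1 * u2) = 1" using assms(1,2) by (simp add: lead_coeff_mult)
  then show ?thesis
    using assms(5) cantor_compose_coprime_snd_zero[OF assms(3,4)]
    by (simp add: cantor_add_def cantor_reduce_step_def numeral_2_eq_2)
qed

lemma cantor_add_coprime_snd_zero_complement:
  fixes f u1 u2 w :: "'a::field_gcd poly"
  assumes "coprime u1 u2" and "u1 * u2 * w = f" and "2 < degree (u1 * u2)"
    and "lead_coeff w = 1" and "degree w \<le> 2"
  shows "cantor_add f (u1, 0) (u2, 0) = (w, 0)"
proof -
  have "cantor_compose f (u1, 0) (u2, 0) = (u1 * u2, 0)"
    using assms(1,2) by (intro cantor_compose_coprime_snd_zero) auto
  moreover have "u1 * u2 \<noteq> 0" using assms(3) by auto
  then have "f div (u1 * u2) = w" using assms(2) by auto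
  ultimately show ?thesis
    using assms(3-5) by (simp add: cantor_add_def cantor_reduce_step_def numeral_2_eq_2)
qed

lemma degree_fst_cantor_reduce_step:
  fixes f U V :: "'a::field_gcd poly"
  assumes "degree f = 5" and "degree U = 4" and "V = 0 \<or> degree V < degree U"
  shows "degree (fst (cantor_reduce_step f (U, V))) \<in> {1, 2}"
proof -
  define W where "W = (f - V ^ 2) div U"
  have "degree (f - V ^ 2) \<in> {5, 6}"
    using assms by (intro degree_diff_square) auto
  moreover have "U \<noteq> 0" using assms(2) by auto
  ultimately have "degree W \<in> {1, 2}"
    using assms(2) degree_div_poly[of U "f - V ^ 2"] by (auto simp: W_def)
  moreover have "fst (cantor_reduce_step f (U, V)) = smult (inverse (lead_coeff W)) W"
    using assms(2) by (simp add: cantor_reduce_step_def W_def Let_def)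
  ultimately show ?thesis by auto
qed

lemma degree_fst_cantor_reduce_twice:
  fixes f U V :: "'a::field_gcd poly"
  assumes "degree f = 5" and "degree U = 2 \<or> degree U = 4" and "V = 0 \<or> degree V < degree U"
  shows "0 < degree (fst ((cantor_reduce_step f ^^ 2) (U, V)))"
proof (cases "degree U = 2")
  case True
  then show ?thesis by (simp add: numeral_2_eq_2 cantor_reduce_step_reduced)
next
  case False
  then have "degree (fst (cantor_reduce_step f (U, V))) \<in> {1, 2}"
    using assms by (intro degree_fst_cantor_reduce_step) auto
  then show ?thesis by (auto simp: numeral_2_eq_2 cantor_reduce_step_reduced)
qed

lemma cantor_compose_self:
  fixes f u v :: "'a::field_gcd poly"
  assumes "lead_coeff u = 1"
  obtains X where "cantor_compose f (u, v) (u, v)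
    = ((u div gcd u (v + v)) ^ 2, X mod (u div gcd u (v + v)) ^ 2)"
proof -
  define d where "d = gcd u (v + v)"
  obtain k where u: "u = d * k" using dvd_def[of d u] by (auto simp: d_def)
  have "d \<noteq> 0" using assms u by auto
  then have "u * u div d ^ 2 = (u div d) ^ 2" by (simp add: u power2_eq_square ac_simps)
  then show ?thesis
    using that normalize_monic_poly[OF assms]
    by (auto simp: cantor_compose_def Let_def case_prod_unfold d_def)
qed

lemma degree_div_gcd_double:
  fixes u v :: "'a::field_gcd poly"
  assumes "(2::'a) \<noteq> 0" and "v \<noteq> 0" and "degree v < degree u"
  shows "0 < degree (u div gcd u (v + v))" and "degree (u div gcd u (v + v)) \<le> degree u"
proof -
  have "v + v = smult 2 v" by (metis one_add_one smult_1_left smult_add_left)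
  then have "v + v \<noteq> 0" and "degree (v + v) = degree v" using assms(1,2) by simp_all
  then have "degree (gcd u (v + v)) < degree u"
    using assms(3) dvd_imp_degree_le[of "gcd u (v + v)" "v + v"] by simp
  moreover have "gcd u (v + v) \<noteq> 0" using \<open>v + v \<noteq> 0\<close> by simp
  ultimately show "0 < degree (u div gcd u (v + v))" "degree (u div gcd u (v + v)) \<le> degree u"
    using degree_div_poly[of "gcd u (v + v)" u] by simp_all
qed

lemma cantor_add_self_ne_one:
  fixes f u v :: "'a::field_gcd poly"
  assumes "(2::'a) \<noteq> 0" and "degree f = 5" and "mumford_reduced f (u, v)" and "v \<noteq> 0"
  shows "cantor_add f (u, v) (u, v) \<noteq> (1, 0)"
proof -
  have monic: "lead_coeff u = 1" and "degree u \<le> 2" and "degree v < degree u"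
    using assms(3,4) by (auto simp: mumford_reduced_def)
  define k where "k = u div gcd u (v + v)"
  obtain X where compose: "cantor_compose f (u, v) (u, v) = (k ^ 2, X mod k ^ 2)"
    using cantor_compose_self[OF monic] unfolding k_def .
  have "0 < degree k" "degree k \<le> 2"
    using degree_div_gcd_double[OF assms(1,4) \<open>degree v < degree u\<close>] \<open>degree u \<le> 2\<close>
    by (simp_all add: k_def)
  then have "k \<noteq> 0" by auto
  then have "degree (k ^ 2) = 2 * degree k" and "k ^ 2 \<noteq> 0"
    by (simp_all add: degree_power_eq)
  then have "degree (k ^ 2) = 2 \<or> degree (k ^ 2) = 4" and "k ^ 2 \<noteq> 0"
    using \<open>0 < degree k\<close> \<open>degree k \<le> 2\<close> by auto
  then have "0 < degree (fst ((cantor_reduce_step f ^^ 2) (k ^ 2, X mod k ^ 2)))"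
    using assms(2) degree_mod_less[OF \<open>k ^ 2 \<noteq> 0\<close>, of X]
    by (intro degree_fst_cantor_reduce_twice) auto
  then have "0 < degree (fst (cantor_add f (u, v) (u, v)))"
    by (auto simp: cantor_add_def compose case_prod_unfold Let_def)
  then show ?thesis by auto
qed

section \<open>Two-torsion of the Jacobian of \<open>y^2 = (x - \<alpha>) q\<^sub>1 q\<^sub>2\<close>\<close>

locale quintic_one_root =
  fixes \<alpha> :: "'a::field_gcd" and q1 q2 :: "'a poly"
  assumes char_ne_2: "(2::'a) \<noteq> 0"
    and monic_q1: "lead_coeff q1 = 1" and monic_q2: "lead_coeff q2 = 1"
    and degree_q1: "degree q1 = 2" and degree_q2: "degree q2 = 2"
    and q1_no_root: "poly q1 x \<noteq> 0" and q2_no_root: "poly q2 x \<noteq> 0"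
    and q1_ne_q2: "q1 \<noteq> q2"
begin

definition l :: "'a poly" where "l = [:-\<alpha>, 1:]"

definition f :: "'a poly" where "f = l * q1 * q2"

lemma monic_l: "lead_coeff l = 1" and degree_l: "degree l = 1"
  by (simp_all add: l_def)

lemma degree_f: "degree f = 5"
proof -
  have "l \<noteq> 0" "q1 \<noteq> 0" "q2 \<noteq> 0" using degree_l degree_q1 degree_q2 by auto
  then show ?thesis using degree_l degree_q1 degree_q2 by (simp add: f_def degree_mult_eq)
qed

lemma poly_f_eq_0_iff: "poly f x = 0 \<longleftrightarrow> x = \<alpha>"
  using q1_no_root q2_no_root by (simp add: f_def l_def)

lemma prime_elem_l: "prime_elem l" and prime_elem_q1: "prime_elem q1"
  using prime_elem_linear_field_poly[of 1 "-\<alpha>"] degree_q1 q1_no_root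
  by (auto simp: l_def intro: prime_elem_if_degree_2_no_root)

lemma coprime_l_q1: "coprime l q1" and coprime_l_q2: "coprime l q2"
  and coprime_q1_q2: "coprime q1 q2"
proof -
  show "coprime l q1" "coprime l q2"
    using prime_elem_l q1_no_root q2_no_root
    by (auto intro!: prime_elem_imp_coprime simp: l_def poly_eq_0_iff_dvd[symmetric])
  have "\<not> q1 dvd q2"
    using monic_dvd_same_degree_eq[OF monic_q1 monic_q2] degree_q1 degree_q2 q1_ne_q2 by auto
  then show "coprime q1 q2" by (rule prime_elem_imp_coprime[OF prime_elem_q1])
qed

lemma monic_divisor_cases:
  assumes "lead_coeff u = 1" and "degree u \<le> 2" and "u dvd f"
  shows "u = 1 \<or> u = l \<or> u = q1 \<or> u = q2"
proof (cases "\<exists>x. poly u x = 0")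
  case True
  then obtain x where "poly u x = 0" by blast
  then have "poly f x = 0" using assms(3) by (auto elim: dvdE)
  then have "x = \<alpha>" by (simp add: poly_f_eq_0_iff)
  then have "l dvd u" using \<open>poly u x = 0\<close> by (simp add: poly_eq_0_iff_dvd l_def)
  then obtain w where u: "u = l * w" by (auto elim: dvdE)
  have "w \<noteq> 0" and "l \<noteq> 0" using u assms(1) by auto
  then have "degree w \<le> 1" using u assms(2) degree_l by (simp add: degree_mult_eq)
  have "w dvd q1 * q2" using assms(3) \<open>l \<noteq> 0\<close> by (simp add: u f_def mult.assoc)
  have "degree w \<noteq> 1"
  proof
    assume "degree w = 1"
    then obtain y where "poly w y = 0" by (rule degree_1_poly_root)
    then have "poly (q1 * q2) y = 0" using \<open>w dvd q1 * q2\<close> by (metis dvdE mult_zero_left poly_mult)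
    then show False using q1_no_root q2_no_root by simp
  qed
  moreover have "lead_coeff w = 1" using u assms(1) monic_l by (simp add: lead_coeff_mult)
  ultimately have "w = 1" using \<open>degree w \<le> 1\<close> by (intro monic_degree_0_eq_1) auto
  then show ?thesis using u by simp
next
  case False
  then have "degree u \<noteq> 1" by (metis degree_1_poly_root)
  then consider "degree u = 0" | "degree u = 2" using assms(2) by linarith
  then show ?thesis
  proof cases
    case 1
    then show ?thesis using assms(1) monic_degree_0_eq_1 by blast
  next
    case 2
    then have "prime_elem u" using False prime_elem_if_degree_2_no_root by blast
    then have "u dvd l \<or> u dvd q1 \<or> u dvd q2"
      using assms(3) by (simp add: f_def prime_elem_dvd_mult_iff)
    moreover have "\<not> u dvd l" using 2 degree_l dvd_imp_degree_le[of u l] by (auto simp: l_def)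
    ultimately show ?thesis
      using monic_dvd_same_degree_eq assms(1) monic_q1 monic_q2 degree_q1 degree_q2 2 by metis
  qed
qed

lemma carrier_two_torsion:
  "carrier (two_torsion f) = {(1, 0), (l, 0), (q1, 0), (q2, 0)}"
proof (intro equalityI subsetI)
  fix D assume "D \<in> carrier (two_torsion f)"
  then obtain u v where D: "D = (u, v)" and reduced: "mumford_reduced f (u, v)"
    and "cantor_add f (u, v) (u, v) = (1, 0)"
    by (cases D) (auto simp: two_torsion_def jacobian_def)
  then have "v = 0" using cantor_add_self_ne_one[OF char_ne_2 degree_f] by blast
  then show "D \<in> {(1, 0), (l, 0), (q1, 0), (q2, 0)}"
    using monic_divisor_cases reduced D by (auto simp: mumford_reduced_def)
next
  fix D assume "D \<in> {(1, 0 :: 'a poly), (l, 0), (q1, 0), (q2, 0)}"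
  then obtain u where D: "D = (u, 0)" and "u \<in> {1, l, q1, q2}" by auto
  then have "lead_coeff u = 1" "degree u \<le> 2" "u dvd f"
    using monic_l monic_q1 monic_q2 degree_l degree_q1 degree_q2
    by (auto simp: f_def)
  then show "D \<in> carrier (two_torsion f)"
    using cantor_add_self_snd_zero
    by (auto simp: D two_torsion_def jacobian_def mumford_reduced_def)
qed

lemma divisors_distinct: "1 \<noteq> l" "1 \<noteq> q1" "1 \<noteq> q2" "l \<noteq> q1" "l \<noteq> q2" "q1 \<noteq> q2"
  using degree_l degree_q1 degree_q2 q1_ne_q2 by auto

lemma cantor_add_one:
  assumes "u \<in> {1, l, q1, q2}"
  shows "cantor_add f (1, 0) (u, 0) = (u, 0)" and "cantor_add f (u, 0) (1, 0) = (u, 0)"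
proof -
  have "lead_coeff u = 1" "degree u \<le> 2" "u dvd f"
    using assms monic_l monic_q1 monic_q2 degree_l degree_q1 degree_q2 by (auto simp: f_def)
  then show "cantor_add f (1, 0) (u, 0) = (u, 0)" "cantor_add f (u, 0) (1, 0) = (u, 0)"
    using cantor_add_coprime_snd_zero[of 1 u f] cantor_add_coprime_snd_zero[of u 1 f] by auto
qed

lemma cantor_add_distinct:
  "cantor_add f (l, 0) (q1, 0) = (q2, 0)" "cantor_add f (q1, 0) (l, 0) = (q2, 0)"
  "cantor_add f (l, 0) (q2, 0) = (q1, 0)" "cantor_add f (q2, 0) (l, 0) = (q1, 0)"
  "cantor_add f (q1, 0) (q2, 0) = (l, 0)" "cantor_add f (q2, 0) (q1, 0) = (l, 0)"
proof -
  have "l \<noteq> 0" "q1 \<noteq> 0" "q2 \<noteq> 0" using degree_l degree_q1 degree_q2 by auto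
  then have "degree (l * q1) = 3" "degree (l * q2) = 3" "degree (q1 * q2) = 4"
    using degree_l degree_q1 degree_q2 by (simp_all add: degree_mult_eq)
  then show
    "cantor_add f (l, 0) (q1, 0) = (q2, 0)" "cantor_add f (q1, 0) (l, 0) = (q2, 0)"
    "cantor_add f (l, 0) (q2, 0) = (q1, 0)" "cantor_add f (q2, 0) (l, 0) = (q1, 0)"
    "cantor_add f (q1, 0) (q2, 0) = (l, 0)" "cantor_add f (q2, 0) (q1, 0) = (l, 0)"
    using coprime_l_q1 coprime_l_q2 coprime_q1_q2 monic_l monic_q1 monic_q2
      degree_l degree_q1 degree_q2
    by (auto intro!: cantor_add_coprime_snd_zero_complement simp: f_def ac_simps coprime_commute)
qed

theorem two_torsion_iso_Klein:
  "two_torsion f \<cong> DirProd (integer_mod_group 2) (integer_mod_group 2)"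
proof -
  define \<psi> :: "'a poly \<times> 'a poly \<Rightarrow> int \<times> int" where
    "\<psi> D = (if fst D = l \<or> fst D = q2 then 1 else 0, if fst D = q1 \<or> fst D = q2 then 1 else 0)" for D
  have "\<psi> \<in> hom (two_torsion f) (DirProd (integer_mod_group 2) (integer_mod_group 2))"
  proof (rule homI)
    fix D assume "D \<in> carrier (two_torsion f)"
    then show "\<psi> D \<in> carrier (DirProd (integer_mod_group 2) (integer_mod_group 2))"
      by (simp add: \<psi>_def carrier_integer_mod_group)
  next
    have "mult (two_torsion f) = cantor_add f" by (simp add: two_torsion_def jacobian_def)
    fix D E assume "D \<in> carrier (two_torsion f)" "E \<in> carrier (two_torsion f)"
    then show "\<psi> (D \<otimes>\<^bsub>two_torsion f\<^esub> E)
        = \<psi> D \<otimes>\<^bsub>DirProd (integer_mod_group 2) (integer_mod_group 2)\<^esub> \<psi> E"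
      unfolding carrier_two_torsion \<open>mult (two_torsion f) = cantor_add f\<close>
      by (elim insertE emptyE; simp add: \<psi>_def mult_DirProd cantor_add_one cantor_add_distinct
          cantor_add_self_snd_zero monic_l monic_q1 monic_q2
          divisors_distinct divisors_distinct[THEN not_sym])
  qed
  moreover have "bij_betw \<psi> (carrier (two_torsion f))
      (carrier (DirProd (integer_mod_group 2) (integer_mod_group 2)))"
    unfolding carrier_two_torsion
    using divisors_distinct divisors_distinct[THEN not_sym]
    by (simp add: bij_betw_def \<psi>_def carrier_integer_mod_group atLeastLessThan_def) auto
  ultimately show ?thesis by (auto simp: is_iso_def iso_def)
qed

end

theorem two_torsion_quintic_iso_Klein:
  fixes h :: "'a::{field_gcd,finite}"
  assumes prime: "prime (card (UNIV :: 'a set))" and mod_5: "card (UNIV :: 'a set) mod 5 = 4"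
    and "h \<noteq> 0"
  shows "two_torsion (monom 1 5 + [:h:]) \<cong> DirProd (integer_mod_group 2) (integer_mod_group 2)"
proof -
  have "CHAR('a) = card (UNIV :: 'a set)" using prime by (rule CHAR_eq_card_if_prime)
  then have two: "(2::'a) \<noteq> 0" and five: "(5::'a) \<noteq> 0"
    using prime_gt_5_if_mod_5[OF prime] mod_5
      of_nat_ne_0_if_less_CHAR[where 'a = 'a, of 2] of_nat_ne_0_if_less_CHAR[where 'a = 'a, of 5]
    by auto
  have bij_5: "bij (\<lambda>x::'a. x ^ 5)" using mod_5 by (rule bij_power_5_if_card_mod_5)
  then obtain \<alpha> where \<alpha>: "\<alpha> ^ 5 = - h" by (metis bij_pointE)
  then have "\<alpha> \<noteq> 0" using \<open>h \<noteq> 0\<close> by auto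
  have unique_root: "x = \<alpha>" if "poly (monom 1 5 + [:h:]) x = 0" for x
  proof -
    have "x ^ 5 + h = 0" using that by (simp add: poly_monom)
    then have "x ^ 5 = - h" by (simp add: eq_neg_iff_add_eq_0)
    then have "x ^ 5 = \<alpha> ^ 5" using \<alpha> by simp
    then show ?thesis by (rule injD[OF bij_is_inj[OF bij_5]])
  qed
  obtain a :: 'a where golden: "a ^ 2 = a + 1"
    using exists_golden_ratio_prime_field prime mod_5 by blast
  define q1 where "q1 = [:\<alpha>^2, a * \<alpha>, 1:]"
  define q2 where "q2 = [:\<alpha>^2, (1 - a) * \<alpha>, 1:]"
  have factorization: "monom 1 5 + [:h:] = [:-\<alpha>, 1:] * q1 * q2"
    unfolding q1_def q2_def using golden \<alpha> by (rule quintic_factorization)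
  have no_root: "poly q x \<noteq> 0" if "q \<in> {q1, q2}" for q x
  proof
    assume "poly q x = 0"
    then have "x = \<alpha>" using that by (auto intro: unique_root simp: factorization)
    then show False
      using \<open>poly q x = 0\<close> that poly_golden_quadratic_nonzero[OF _ five \<open>\<alpha> \<noteq> 0\<close>]
        golden golden_ratio_conjugate[OF golden] by (auto simp: q1_def q2_def)
  qed
  have "q1 \<noteq> q2"
    using golden_ratio_ne_conjugate[OF golden five] \<open>\<alpha> \<noteq> 0\<close> by (simp add: q1_def q2_def)
  moreover have "lead_coeff q1 = 1" "lead_coeff q2 = 1" "degree q1 = 2" "degree q2 = 2"
    by (simp_all add: q1_def q2_def)
  ultimately interpret quintic_one_root \<alpha> q1 q2
    using two no_root by unfold_locales auto
  show ?thesis using two_torsion_iso_Klein unfolding factorization f_def l_def .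
qed

theorem corollary6:
  fixes n :: nat and h :: "'a::{field_gcd,finite}"
  assumes "n > 0"
    and "prime (4 * 5 ^ n - 1 :: nat)"
    and "card (UNIV :: 'a set) = 4 * 5 ^ n - 1"
    and "h \<noteq> 0"
  shows "two_torsion (monom 1 5 + [:h:]) \<cong>
           DirProd (integer_mod_group 2) (integer_mod_group 2)"
proof -
  obtain m where "n = Suc m" using assms(1) gr0_implies_Suc by blast
  moreover have "(1::nat) \<le> 5 ^ m" by simp
  ultimately have "(4 * 5 ^ n - 1 :: nat) = 5 * (4 * 5 ^ m - 1) + 4"
    by (simp add: diff_mult_distrib2)
  then have "card (UNIV :: 'a set) mod 5 = 4" using assms(3) by simp
  then show ?thesis
    using two_torsion_quintic_iso_Klein assms(2-4) by metis
qed

end
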